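(* Let $K\ge 2$, $\mathbf{V}\in\mathbb{C}^{n\times r}$, and let $\tilde{\mathbf{V}}\in\mathbb{R}^{B_Kn\times 2r}$ and the coordinate groups $\mathcal{G}^{(i)}$ be as in the context. If $\mathcal{I}\subset[B_Kn]$ with $|\mathcal{I}|=2r-1$ contains three or more indices from the same coordinate group $\mathcal{G}^{(i)}$, then $\mathrm{rank}(\tilde{\mathbf{V}}_{\mathcal{I},:})<2r-1$.
   Context: $B_K=K/2$ if $K$ is even and $B_K=K$ if $K$ is odd; $\rho_m=e^{-\mathrm{i}\pi(2m+1)/K}$ for $m\in\{0,\dots,B_K-1\}$. $\tilde{\mathbf{V}}$ has rows indexed by $j=i+mn$ ($i\in[n]$, $m\in\{0,\dots,B_K-1\}$), and row $j$ equals $[\mathrm{Re}(\rho_m\mathbf{V}_{i,:}),\ \mathrm{Im}(\rho_m\mathbf{V}_{i,:})]\in\mathbb{R}^{2r}$. The coordinate group $\mathcal{G}^{(i)}$ is the set of row indices $\{i,i+n,\dots,i+(B_K-1)n\}$. $\tilde{\mathbf{V}}_{\mathcal{I},:}$ is the submatrix of rows indexed by $\mathcal{I}$. *)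

theory Defs
  imports Complex_Main "Jordan_Normal_Form.DL_Rank_Submatrix"
begin

definition BK :: "nat \<Rightarrow> nat" where
  "BK K = (if even K then K div 2 else K)"

definition rho :: "nat \<Rightarrow> nat \<Rightarrow> complex" where
  "rho K m = cis (- pi * real (2 * m + 1) / real K)"

(* Vtilde: rows indexed by j = i + m*n (0-based, i < n, m < B_K),
   row j = [Re(rho_m V_{i,:}), Im(rho_m V_{i,:})] *)
definition Vtilde :: "nat \<Rightarrow> nat \<Rightarrow> nat \<Rightarrow> complex mat \<Rightarrow> real mat" where
  "Vtilde K n r V = mat (BK K * n) (2 * r)
     (\<lambda>(j, c). if c < r then Re (rho K (j div n) * V $$ (j mod n, c))
               else Im (rho K (j div n) * V $$ (j mod n, c - r)))"

definition coord_group :: "nat \<Rightarrow> nat \<Rightarrow> nat \<Rightarrow> nat set" where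
  "coord_group K n i = {i + m * n | m. m < BK K}"

end

theory Submission
  imports Defs
begin

text \<open>All rows of \<open>Vtilde\<close> in one coordinate group \<open>G\<^sup>(\<^sup>i\<^sup>)\<close> are images of the numbers
  \<open>\<rho>\<^sub>m\<close> under the same real-linear map \<open>w \<mapsto> [Re (w V\<^sub>i), Im (w V\<^sub>i)]\<close>. Three complex numbers are
  always linearly dependent over \<open>\<real>\<close>, so three rows from one group satisfy a nontrivial linear
  relation, and a matrix with \<open>2r - 1\<close> rows that are linearly dependent has rank below \<open>2r - 1\<close>.\<close>

lemma rank_lt_dim_row_if_left_null:
  fixes A :: "'a::field mat"
  assumes A: "A \<in> carrier_mat N nc" and y: "y \<in> carrier_vec N" "y \<noteq> 0\<^sub>v N"
    and null: "\<And>j. j < nc \<Longrightarrow> y \<bullet> col A j = 0"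
  shows "vec_space.rank N A < N"
proof -
  interpret vec_space "TYPE('a)" N .
  obtain k where k: "k < N" "y $ k \<noteq> 0"
    using y by (metis carrier_vecD eq_vecI index_zero_vec)
  obtain S where S: "maximal S (\<lambda>T. T \<subseteq> set (cols A) \<and> lin_indpt T)"
    using maximal_exists[of "\<lambda>T. T \<subseteq> set (cols A) \<and> lin_indpt T" "card (set (cols A))" "{}"]
    by (meson List.finite_set card_mono empty_iff empty_subsetI finite_lin_indpt2 rev_finite_subset)
  have S_cols: "S \<subseteq> set (cols A)" and S_indpt: "lin_indpt S"
    using S unfolding maximal_def by auto
  have S_carrier: "S \<subseteq> carrier_vec N"
    using S_cols A cols_dim by blast
  have S_finite: "finite S"
    using S_cols List.finite_set rev_finite_subset by blast
  txt \<open>The columns lie in the hyperplane orthogonal to \<open>y\<close>, which misses \<open>unit_vec N k\<close>;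
    hence a maximal independent set of columns cannot be a basis.\<close>
  define W where "W = {v \<in> carrier_vec N. y \<bullet> v = 0}"
  have "submodule class_ring W V"
    by unfold_locales
      (use y in \<open>auto simp: W_def scalar_prod_add_distrib scalar_prod_smult_distrib class_ring_simps\<close>)
  moreover have "S \<subseteq> W"
    using S_cols A null unfolding W_def cols_def by auto
  ultimately have "span S \<subseteq> W"
    using span_is_subset by blast
  moreover have "unit_vec N k \<notin> W"
    using k y by (simp add: W_def scalar_prod_right_unit)
  ultimately have "\<not> basis S"
    using k unfolding basis_def by auto
  then have "card S \<noteq> N"
    using dim_li_is_basis[OF fin_dim S_finite _ S_indpt] S_carrier dim_is_n by auto
  moreover have "card S \<le> N"
    using li_le_dim(2)[OF fin_dim _ S_indpt] S_carrier dim_is_n by simp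
  ultimately show ?thesis
    using rank_card_indpt[OF A S] by simp
qed

lemma bij_betw_pick:
  assumes "finite I"
  shows "bij_betw (pick I) {..<card I} I"
proof (rule bij_betw_byWitness[where f' = "\<lambda>i. card {a \<in> I. a < i}"])
  show "(\<lambda>i. card {a \<in> I. a < i}) ` I \<subseteq> {..<card I}"
    using assms by (auto intro!: psubset_card_mono)
qed (auto simp: pick_card_in_set card_pick pick_in_set)

lemma rank_submatrix_lt_card_if_rows_dependent:
  fixes A :: "'a::field mat" and u :: "nat \<Rightarrow> 'a"
  assumes I: "I \<subseteq> {..<dim_row A}" and a: "a \<in> I" "u a \<noteq> 0"
    and dep: "\<And>j. j < dim_col A \<Longrightarrow> (\<Sum>i\<in>I. u i * A $$ (i, j)) = 0"
  shows "vec_space.rank (card I) (submatrix A I UNIV) < card I"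
proof -
  have pick: "bij_betw (pick I) {..<card I} I"
    using I bij_betw_pick finite_subset by blast
  have rows: "{i. i < dim_row A \<and> i \<in> I} = I"
    using I by auto
  have cols: "{j. j < dim_col A \<and> j \<in> UNIV} = {..<dim_col A}"
    by auto
  have "dim_row (submatrix A I UNIV) = card I" "dim_col (submatrix A I UNIV) = dim_col A"
    unfolding dim_submatrix rows cols by simp_all
  then have carrier: "submatrix A I UNIV \<in> carrier_mat (card I) (dim_col A)"
    by (rule carrier_matI)
  define y where "y = vec (card I) (\<lambda>k. u (pick I k))"
  have y_carrier: "y \<in> carrier_vec (card I)"
    by (simp add: y_def)
  obtain k where "k < card I" "pick I k = a"
    using pick a(1) by (metis bij_betw_iff_bijections lessThan_iff)
  then have y_nonzero: "y \<noteq> 0\<^sub>v (card I)"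
    using a(2) unfolding y_def by (metis index_vec index_zero_vec(1))
  have y_null: "y \<bullet> col (submatrix A I UNIV) j = 0" if j: "j < dim_col A" for j
  proof -
    have "y \<bullet> col (submatrix A I UNIV) j = (\<Sum>k<card I. u (pick I k) * A $$ (pick I k, j))"
      using j by (simp add: scalar_prod_def y_def dim_submatrix rows submatrix_index pick_UNIV
          atLeast0LessThan)
    also have "\<dots> = (\<Sum>i\<in>I. u i * A $$ (i, j))"
      using sum.reindex_bij_betw[OF pick] .
    finally show ?thesis
      using dep[OF j] by simp
  qed
  show ?thesis
    by (rule rank_lt_dim_row_if_left_null[OF carrier y_carrier y_nonzero y_null])
qed

lemma rank_submatrix_lt_card_if_three_rows_dependent:
  fixes A :: "'a::field mat"
  assumes I: "I \<subseteq> {..<dim_row A}" and abc: "{a, b, c} \<subseteq> I" "a \<noteq> b" "b \<noteq> c" "a \<noteq> c"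
    and nonzero: "(x, y, z) \<noteq> (0, 0, 0)"
    and rel: "\<And>j. j < dim_col A \<Longrightarrow> x * A $$ (a, j) + y * A $$ (b, j) + z * A $$ (c, j) = 0"
  shows "vec_space.rank (card I) (submatrix A I UNIV) < card I"
proof -
  define u where "u k = (if k = a then x else if k = b then y else if k = c then z else 0)" for k
  have "finite I"
    using I finite_subset by blast
  have dep: "(\<Sum>k\<in>I. u k * A $$ (k, j)) = 0" if "j < dim_col A" for j
  proof -
    have "(\<Sum>k\<in>I. u k * A $$ (k, j)) = (\<Sum>k\<in>{a, b, c}. u k * A $$ (k, j))"
      by (rule sum.mono_neutral_right) (use \<open>finite I\<close> abc(1) in \<open>auto simp: u_def\<close>)
    also have "\<dots> = x * A $$ (a, j) + y * A $$ (b, j) + z * A $$ (c, j)"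
      using abc(2-4) by (simp add: u_def)
    finally show ?thesis
      using rel that by simp
  qed
  have "u a \<noteq> 0 \<or> u b \<noteq> 0 \<or> u c \<noteq> 0"
    using nonzero abc(2-4) by (auto simp: u_def)
  then obtain e where e: "e \<in> I" "u e \<noteq> 0"
    using abc(1) by blast
  from I e dep show ?thesis
    by (rule rank_submatrix_lt_card_if_rows_dependent)
qed

lemma complex_real_dependent_three:
  fixes w1 w2 w3 :: complex
  obtains x y z :: real where "(x, y, z) \<noteq> (0, 0, 0)"
    and "of_real x * w1 + of_real y * w2 + of_real z * w3 = 0"
proof -
  define det where "det u v = Re u * Im v - Im u * Re v" for u v :: complex
  txt \<open>The \<open>2\<times>2\<close> minors always give a relation (Cramer's rule in \<open>\<real>\<^sup>2\<close>); it is trivial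
    only if the three numbers are collinear.\<close>
  have cross: "of_real (det w2 w3) * w1 + of_real (det w3 w1) * w2 + of_real (det w1 w2) * w3 = 0"
    by (simp add: det_def complex_eq_iff algebra_simps)
  consider "(det w2 w3, det w3 w1, det w1 w2) \<noteq> (0, 0, 0)" | "w1 = 0" | "w1 \<noteq> 0" "det w1 w2 = 0"
    by auto
  then show thesis
  proof cases
    case 1
    with cross that show ?thesis by blast
  next
    case 2
    with that[of 1 0 0] show ?thesis by simp
  next
    case 3
    txt \<open>Collinearity with \<open>w\<^sub>1 \<noteq> 0\<close> gives \<open>|w\<^sub>1|\<^sup>2 w\<^sub>2 = (w\<^sub>1 \<bullet> w\<^sub>2) w\<^sub>1\<close>.\<close>
    define s where "s = Re w1 * Re w2 + Im w1 * Im w2"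
    define q where "q = (Re w1)\<^sup>2 + (Im w1)\<^sup>2"
    have "q \<noteq> 0"
      using 3(1) by (simp add: q_def complex_eq_iff)
    have "s * Re w1 - q * Re w2 = Im w1 * det w1 w2"
      and "s * Im w1 - q * Im w2 = - Re w1 * det w1 w2"
      by (simp_all add: s_def q_def det_def power2_eq_square algebra_simps)
    then have "of_real s * w1 + of_real (- q) * w2 = 0"
      using 3(2) by (simp add: complex_eq_iff)
    with \<open>q \<noteq> 0\<close> that[of s "- q" 0] show ?thesis by simp
  qed
qed

lemma dim_Vtilde [simp]:
  "dim_row (Vtilde K n r V) = BK K * n" "dim_col (Vtilde K n r V) = 2 * r"
  by (simp_all add: Vtilde_def)

lemma coord_group_memD:
  assumes "j \<in> coord_group K n i" "i < n"
  shows "j div n < BK K" "j mod n = i" "j < BK K * n"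
proof -
  show "j div n < BK K" "j mod n = i"
    using assms by (auto simp: coord_group_def)
  then show "j < BK K * n"
    using assms(2) by (simp add: div_less_iff_less_mult)
qed

lemma Vtilde_index_coord_group:
  assumes "j \<in> coord_group K n i" "i < n" "c < 2 * r"
  shows "Vtilde K n r V $$ (j, c) = (if c < r then Re (rho K (j div n) * V $$ (i, c))
           else Im (rho K (j div n) * V $$ (i, c - r)))"
  using assms coord_group_memD[OF assms(1,2)] by (simp add: Vtilde_def)

lemma Vtilde_coord_group_rows_dependent:
  assumes i: "i < n"
    and abc: "a \<in> coord_group K n i" "b \<in> coord_group K n i" "c \<in> coord_group K n i"
  obtains x y z :: real where "(x, y, z) \<noteq> (0, 0, 0)"
    and "\<And>j. j < 2 * r \<Longrightarrow>
      x * Vtilde K n r V $$ (a, j) + y * Vtilde K n r V $$ (b, j) + z * Vtilde K n r V $$ (c, j) = 0"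
proof -
  obtain x y z :: real where nonzero: "(x, y, z) \<noteq> (0, 0, 0)" and rel:
    "of_real x * rho K (a div n) + of_real y * rho K (b div n) + of_real z * rho K (c div n) = 0"
    by (rule complex_real_dependent_three)
  have Re_Im: "x * Re (rho K (a div n) * v) + y * Re (rho K (b div n) * v) + z * Re (rho K (c div n) * v) = 0
      \<and> x * Im (rho K (a div n) * v) + y * Im (rho K (b div n) * v) + z * Im (rho K (c div n) * v) = 0"
    for v
  proof -
    have "of_real x * (rho K (a div n) * v) + of_real y * (rho K (b div n) * v)
        + of_real z * (rho K (c div n) * v)
        = (of_real x * rho K (a div n) + of_real y * rho K (b div n) + of_real z * rho K (c div n)) * v"
      by (simp add: algebra_simps)
    also have "\<dots> = 0"
      using rel by simp
    finally show ?thesis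
      by (simp add: complex_eq_iff)
  qed
  show thesis
  proof (rule that[OF nonzero])
    fix j assume "j < 2 * r"
    then show "x * Vtilde K n r V $$ (a, j) + y * Vtilde K n r V $$ (b, j) + z * Vtilde K n r V $$ (c, j) = 0"
      using Re_Im Vtilde_index_coord_group[OF _ i] abc by simp
  qed
qed

theorem lemma8:
  fixes K n r :: nat and V :: "complex mat" and I :: "nat set"
  assumes "K \<ge> 2"
    and "V \<in> carrier_mat n r"
    and "I \<subseteq> {0..<BK K * n}"
    and "card I = 2 * r - 1"
    and "\<exists>i<n. card (I \<inter> coord_group K n i) \<ge> 3"
  shows "vec_space.rank (card I) (submatrix (Vtilde K n r V) I UNIV) < 2 * r - 1"
proof -
  let ?Vt = "Vtilde K n r V"
  obtain i where i: "i < n" "card (I \<inter> coord_group K n i) \<ge> 3"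
    using assms(5) by blast
  obtain T where "T \<subseteq> I \<inter> coord_group K n i" "card T = 3"
    using obtain_subset_with_card_n[OF i(2)] by blast
  then obtain a b c where abc: "{a, b, c} \<subseteq> I \<inter> coord_group K n i" "a \<noteq> b" "b \<noteq> c" "a \<noteq> c"
    by (auto simp: card_3_iff)
  obtain x y z where nonzero: "(x, y, z) \<noteq> (0, 0, 0)" and rel: "\<And>j. j < 2 * r \<Longrightarrow>
      x * ?Vt $$ (a, j) + y * ?Vt $$ (b, j) + z * ?Vt $$ (c, j) = 0"
    using Vtilde_coord_group_rows_dependent[OF i(1)] abc(1) by blast
  have "I \<subseteq> {..<dim_row ?Vt}"
    using assms(3) by auto
  then have "vec_space.rank (card I) (submatrix ?Vt I UNIV) < card I"
    using abc nonzero rel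
    by (intro rank_submatrix_lt_card_if_three_rows_dependent[of I ?Vt a b c x y z]) auto
  then show ?thesis
    using assms(4) by simp
qed

end
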